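(* Let $G$ be a locally path connected, path connected, semilocally simply connected topological group with identity $1_G$, and let $H=\{[\gamma]\in\Pi_1(G):\gamma(0)=1_G\}$ be its universal covering group, with multiplication $[\gamma]\otimes[\eta]=[t\mapsto\gamma(t)\eta(t)]$, topology as a subspace of $\Pi_1(G)$, and covering homomorphism $p\colon H\to G$, $p([\gamma])=\gamma(1)$. Let $H\ltimes_p G$ be the transformation groupoid of the left action $[\eta]\cdot g=p([\eta])g$ of $H$ on $G$. Then the map $J\colon H\ltimes_p G\to\Pi_1(G)$, $J([\gamma],g)=[\gamma\cdot g]$ with $(\gamma\cdot g)(t)=\gamma(t)g$, is an isomorphism of topological groupoids. In particular $\Pi_1(G)$ is isomorphic to a transformation groupoid.
   Context: $\Pi_1(G)$ is the fundamental groupoid: endpoint-fixing path-homotopy classes $[\gamma]$ of paths in $G$, with range $\gamma(1)$, source $\gamma(0)$, product $[\alpha][\beta]=[\alpha\,\Box\,\beta]$ when $\alpha(0)=\beta(1)$ (where $\alpha\,\Box\,\beta$ first traverses $\beta$ then $\alpha$), and inverse given by the reversed path; it carries the UC topology, generated by the sets $N([\gamma],U,V)=\{[\delta\,\Box\,\gamma\,\Box\,\theta] : \delta\text{ a path in }U,\ \delta(0)=\gamma(1),\ \theta\text{ a path in }V,\ \theta(1)=\gamma(0)\}$ with $U,V$ path connected relatively inessential open neighbourhoods (a set $V$ is relatively inessential if $\pi_1(V,x)\to\pi_1(G,x)$ induced by inclusion is trivial). The transformation groupoid $H\ltimes_p G$ has underlying space $H\times G$ (product topology), source $(\eta,g)\mapsto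 g$, range $(\eta,g)\mapsto p(\eta)g$; $(\eta,h)$ and $(\gamma,g)$ are composable iff $h=p(\gamma)g$, with $(\eta,h)(\gamma,g)=(\eta\otimes\gamma,g)$, and $(\gamma,g)^{-1}=(\gamma^{-1},p(\gamma)g)$. *)

theory Defs
  imports "HOL-Analysis.Analysis" "HOL-Algebra.Group"
begin

definition topological_group :: "'a topology \<Rightarrow> 'a monoid \<Rightarrow> bool" where
  "topological_group X G \<longleftrightarrow> group G \<and> carrier G = topspace X \<and>
     continuous_map (prod_topology X X) X (\<lambda>(x, y). x \<otimes>\<^bsub>G\<^esub> y) \<and>
     continuous_map X X (\<lambda>x. inv\<^bsub>G\<^esub> x)"

text \<open>Concatenation: pjoin a b first traverses a, then b.
  The paper's alpha Box beta (first beta, then alpha) is pjoin beta alpha.\<close>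
definition pjoin :: "(real \<Rightarrow> 'a) \<Rightarrow> (real \<Rightarrow> 'a) \<Rightarrow> real \<Rightarrow> 'a" where
  "pjoin g1 g2 = (\<lambda>x. if x \<le> 1/2 then g1 (2 * x) else g2 (2 * x - 1))"

definition preverse :: "(real \<Rightarrow> 'a) \<Rightarrow> real \<Rightarrow> 'a" where
  "preverse g = (\<lambda>x. g (1 - x))"

definition path_homotopic :: "'a topology \<Rightarrow> (real \<Rightarrow> 'a) \<Rightarrow> (real \<Rightarrow> 'a) \<Rightarrow> bool" where
  "path_homotopic X p q \<longleftrightarrow> pathin X p \<and> pathin X q \<and> p 0 = q 0 \<and> p 1 = q 1 \<and>
     homotopic_with (\<lambda>r. r 0 = p 0 \<and> r 1 = p 1) (top_of_set {0..1}) X p q"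

definition path_class :: "'a topology \<Rightarrow> (real \<Rightarrow> 'a) \<Rightarrow> (real \<Rightarrow> 'a) set" where
  "path_class X p = {q. path_homotopic X p q}"

definition fundamental_groupoid :: "'a topology \<Rightarrow> (real \<Rightarrow> 'a) set set" where
  "fundamental_groupoid X = {path_class X p | p. pathin X p}"

definition rep :: "(real \<Rightarrow> 'a) set \<Rightarrow> real \<Rightarrow> 'a" where
  "rep c = (SOME p. p \<in> c)"

definition pg_source :: "(real \<Rightarrow> 'a) set \<Rightarrow> 'a" where
  "pg_source c = rep c 0"

definition pg_range :: "(real \<Rightarrow> 'a) set \<Rightarrow> 'a" where
  "pg_range c = rep c 1"

text \<open>[alpha][beta] = [alpha Box beta] (first beta, then alpha), defined when alpha(0) = beta(1).\<close>
definition pg_mult :: "'a topology \<Rightarrow> (real \<Rightarrow> 'a) set \<Rightarrow> (real \<Rightarrow> 'a) set \<Rightarrow> (real \<Rightarrow> 'a) set" where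
  "pg_mult X a b = path_class X (pjoin (rep b) (rep a))"

definition pg_inv :: "'a topology \<Rightarrow> (real \<Rightarrow> 'a) set \<Rightarrow> (real \<Rightarrow> 'a) set" where
  "pg_inv X a = path_class X (preverse (rep a))"

definition null_loop_at :: "'a topology \<Rightarrow> 'a set \<Rightarrow> 'a \<Rightarrow> bool" where
  \<comment> \<open>pi_1(V,x) \<rightarrow> pi_1(X,x) induced by inclusion is trivial\<close>
  "null_loop_at X V x \<longleftrightarrow>
     (\<forall>g. pathin (subtopology X V) g \<and> g 0 = x \<and> g 1 = x \<longrightarrow> path_homotopic X g (\<lambda>t. x))"

definition relatively_inessential :: "'a topology \<Rightarrow> 'a set \<Rightarrow> bool" where
  "relatively_inessential X V \<longleftrightarrow> V \<subseteq> topspace X \<and> (\<forall>x\<in>V. null_loop_at X V x)"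

definition semilocally_simply_connected :: "'a topology \<Rightarrow> bool" where
  "semilocally_simply_connected X \<longleftrightarrow>
     (\<forall>x\<in>topspace X. \<exists>V. openin X V \<and> x \<in> V \<and> null_loop_at X V x)"

definition uc_nbhd :: "'a topology \<Rightarrow> (real \<Rightarrow> 'a) set \<Rightarrow> 'a set \<Rightarrow> 'a set \<Rightarrow> (real \<Rightarrow> 'a) set set" where
  \<comment> \<open>N([gamma],U,V) = {[delta Box gamma Box theta]}: first theta, then gamma, then delta\<close>
  "uc_nbhd X c U V =
     {path_class X (pjoin (pjoin \<theta> (rep c)) \<delta>) | \<delta> \<theta>.
        pathin (subtopology X U) \<delta> \<and> \<delta> 0 = pg_range c \<and>
        pathin (subtopology X V) \<theta> \<and> \<theta> 1 = pg_source c}"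

definition uc_basis :: "'a topology \<Rightarrow> (real \<Rightarrow> 'a) set set set" where
  "uc_basis X = {uc_nbhd X c U V | c U V. c \<in> fundamental_groupoid X \<and>
       openin X U \<and> path_connectedin X U \<and> relatively_inessential X U \<and> pg_range c \<in> U \<and>
       openin X V \<and> path_connectedin X V \<and> relatively_inessential X V \<and> pg_source c \<in> V}"

definition uc_topology :: "'a topology \<Rightarrow> (real \<Rightarrow> 'a) set topology" where
  "uc_topology X = topology_generated_by (uc_basis X)"

definition ucg_carrier :: "'a topology \<Rightarrow> 'a monoid \<Rightarrow> (real \<Rightarrow> 'a) set set" where
  "ucg_carrier X G = {c \<in> fundamental_groupoid X. pg_source c = \<one>\<^bsub>G\<^esub>}"

definition ucg_mult :: "'a topology \<Rightarrow> 'a monoid \<Rightarrow> (real \<Rightarrow> 'a) set \<Rightarrow> (real \<Rightarrow> 'a) set \<Rightarrow> (real \<Rightarrow> 'a) set" where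
  "ucg_mult X G a b = path_class X (\<lambda>t. rep a t \<otimes>\<^bsub>G\<^esub> rep b t)"

definition ucg_inv :: "'a topology \<Rightarrow> 'a monoid \<Rightarrow> (real \<Rightarrow> 'a) set \<Rightarrow> (real \<Rightarrow> 'a) set" where
  "ucg_inv X G a = path_class X (\<lambda>t. inv\<^bsub>G\<^esub> (rep a t))"

definition ucg_proj :: "(real \<Rightarrow> 'a) set \<Rightarrow> 'a" where
  "ucg_proj a = rep a 1"

definition ucg_topology :: "'a topology \<Rightarrow> 'a monoid \<Rightarrow> (real \<Rightarrow> 'a) set topology" where
  "ucg_topology X G = subtopology (uc_topology X) (ucg_carrier X G)"

definition tg_arrows :: "'a topology \<Rightarrow> 'a monoid \<Rightarrow> ((real \<Rightarrow> 'a) set \<times> 'a) set" where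
  "tg_arrows X G = ucg_carrier X G \<times> topspace X"

definition tg_topology :: "'a topology \<Rightarrow> 'a monoid \<Rightarrow> ((real \<Rightarrow> 'a) set \<times> 'a) topology" where
  "tg_topology X G = prod_topology (ucg_topology X G) X"

definition tg_source :: "((real \<Rightarrow> 'a) set \<times> 'a) \<Rightarrow> 'a" where
  "tg_source x = snd x"

definition tg_range :: "'a monoid \<Rightarrow> ((real \<Rightarrow> 'a) set \<times> 'a) \<Rightarrow> 'a" where
  "tg_range G x = ucg_proj (fst x) \<otimes>\<^bsub>G\<^esub> snd x"

definition tg_mult :: "'a topology \<Rightarrow> 'a monoid \<Rightarrow> ((real \<Rightarrow> 'a) set \<times> 'a) \<Rightarrow> ((real \<Rightarrow> 'a) set \<times> 'a) \<Rightarrow> ((real \<Rightarrow> 'a) set \<times> 'a)" where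
  "tg_mult X G x y = (ucg_mult X G (fst x) (fst y), snd y)"

definition tg_inv :: "'a topology \<Rightarrow> 'a monoid \<Rightarrow> ((real \<Rightarrow> 'a) set \<times> 'a) \<Rightarrow> ((real \<Rightarrow> 'a) set \<times> 'a)" where
  "tg_inv X G x = (ucg_inv X G (fst x), ucg_proj (fst x) \<otimes>\<^bsub>G\<^esub> snd x)"

text \<open>A groupoid is given by its arrow space (a topology whose topspace is the set of arrows),
  source, range, product (x y composable iff source x = range y) and inverse.\<close>
definition topological_groupoid_iso ::
  "'x topology \<Rightarrow> ('x \<Rightarrow> 'o) \<Rightarrow> ('x \<Rightarrow> 'o) \<Rightarrow> ('x \<Rightarrow> 'x \<Rightarrow> 'x) \<Rightarrow> ('x \<Rightarrow> 'x) \<Rightarrow>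
   'y topology \<Rightarrow> ('y \<Rightarrow> 'p) \<Rightarrow> ('y \<Rightarrow> 'p) \<Rightarrow> ('y \<Rightarrow> 'y \<Rightarrow> 'y) \<Rightarrow> ('y \<Rightarrow> 'y) \<Rightarrow>
   ('x \<Rightarrow> 'y) \<Rightarrow> bool" where
  "topological_groupoid_iso T s r m i T' s' r' m' i' J \<longleftrightarrow>
     homeomorphic_map T T' J \<and>
     (\<forall>x\<in>topspace T. \<forall>y\<in>topspace T. s x = r y \<longleftrightarrow> s' (J x) = r' (J y)) \<and>
     (\<forall>x\<in>topspace T. \<forall>y\<in>topspace T. s x = r y \<longrightarrow> J (m x y) = m' (J x) (J y)) \<and>
     (\<forall>x\<in>topspace T. J (i x) = i' (J x))"

definition J_map :: "'a topology \<Rightarrow> 'a monoid \<Rightarrow> ((real \<Rightarrow> 'a) set \<times> 'a) \<Rightarrow> (real \<Rightarrow> 'a) set" where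
  "J_map X G x = path_class X (\<lambda>t. rep (fst x) t \<otimes>\<^bsub>G\<^esub> snd x)"

end

theory Submission
  imports Defs
begin

(*
  Right translation by g turns a path from the identity into a path starting at g, and right
  division by its starting point undoes this; so J is a bijection, inverted by
  [\<delta>] \<mapsto> ([t \<mapsto> \<delta>(t) \<delta>(0)\<inverse>], \<delta>(0)).  Compatibility with the groupoid operations comes
  from the square (s, t) \<mapsto> \<eta>(s) \<gamma>(t): its diagonal \<eta>\<gamma> is homotopic to the path along two of
  its edges, first \<gamma> and then \<eta>\<gamma>(1) (when \<eta>(0) = 1), which is the groupoid product
  (\<eta>, \<gamma>(1) g)(\<gamma>, g) after translation by g; inverses work the same way.

  Continuity of J and of its inverse reduces to continuity, for the UC topology, of pointwise
  multiplication of path classes and of the constant-path map G \<rightarrow> \<Pi>\<^sub>1(G).  The former holds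
  because the pointwise product of \<theta>\<^sub>1\<alpha>\<delta>\<^sub>1 and \<theta>\<^sub>2\<beta>\<delta>\<^sub>2 is (\<theta>\<^sub>1\<theta>\<^sub>2)(\<alpha>\<beta>)(\<delta>\<^sub>1\<delta>\<^sub>2),
  so by continuity of multiplication in G basic neighbourhoods multiply into basic neighbourhoods.
*)

section \<open>Path homotopy in a topological space\<close>

abbreviation unit_square :: "(real \<times> real) set" where
  "unit_square \<equiv> {0..1} \<times> {0..1}"

lemma continuous_map_compose_top_of_set:
  assumes "continuous_map (top_of_set S) X h" "continuous_on T f" "f ` T \<subseteq> S"
  shows "continuous_map (top_of_set T) X (\<lambda>x. h (f x))"
  using continuous_map_compose[of "top_of_set T" "top_of_set S" f X h] assms
  by (simp add: o_def image_subset_iff_funcset)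

lemma continuous_map_square_fst:
  "pathin X p \<Longrightarrow> continuous_map (top_of_set unit_square) X (\<lambda>z. p (fst z))"
  unfolding pathin_def
  by (rule continuous_map_compose_top_of_set) (auto intro!: continuous_intros)

lemma continuous_map_square_snd:
  "pathin X p \<Longrightarrow> continuous_map (top_of_set unit_square) X (\<lambda>z. p (snd z))"
  unfolding pathin_def
  by (rule continuous_map_compose_top_of_set) (auto intro!: continuous_intros)

lemma path_homotopicI:
  assumes H: "continuous_map (top_of_set unit_square) X H"
    and "\<And>t. t \<in> {0..1} \<Longrightarrow> H (0, t) = p t" "\<And>t. t \<in> {0..1} \<Longrightarrow> H (1, t) = q t"
    and "\<And>s. s \<in> {0..1} \<Longrightarrow> H (s, 0) = p 0" "\<And>s. s \<in> {0..1} \<Longrightarrow> H (s, 1) = p 1"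
  shows "path_homotopic X p q"
proof -
  have slice: "continuous_map (top_of_set {0..1}) X (\<lambda>t. H (s, t))" if "s \<in> {0..1}" for s
    by (rule continuous_map_compose_top_of_set[OF H]) (use that in \<open>auto intro!: continuous_intros\<close>)
  have "pathin X p" "pathin X q"
    unfolding pathin_def using assms(2,3)
    by (auto intro: continuous_map_eq[OF slice[of 0]] continuous_map_eq[OF slice[of 1]])
  moreover have "homotopic_with (\<lambda>r. r 0 = p 0 \<and> r 1 = p 1) (top_of_set {0..1}) X p q"
    by (subst homotopic_with) (force, use assms in auto)
  moreover have "q 0 = p 0" "q 1 = p 1"
    using assms(3-5)[of 0] assms(3-5)[of 1] by auto
  ultimately show ?thesis
    unfolding path_homotopic_def by auto
qed

lemma path_homotopicE:
  assumes "path_homotopic X p q"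
  obtains H where "continuous_map (top_of_set unit_square) X H"
    "\<And>t. H (0, t) = p t" "\<And>t. H (1, t) = q t"
    "\<And>s. s \<in> {0..1} \<Longrightarrow> H (s, 0) = p 0" "\<And>s. s \<in> {0..1} \<Longrightarrow> H (s, 1) = p 1"
  using assms unfolding path_homotopic_def homotopic_with_def by auto

lemma path_homotopicD:
  assumes "path_homotopic X p q"
  shows "pathin X p" "pathin X q" "q 0 = p 0" "q 1 = p 1"
  using assms by (auto simp: path_homotopic_def)

lemma path_homotopic_refl: "pathin X p \<Longrightarrow> path_homotopic X p p"
  by (simp add: path_homotopic_def pathin_def)

lemma path_homotopic_sym: "path_homotopic X p q \<Longrightarrow> path_homotopic X q p"
  unfolding path_homotopic_def by (auto dest: homotopic_with_symD)

lemma path_homotopic_trans [trans]: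
  "path_homotopic X p q \<Longrightarrow> path_homotopic X q r \<Longrightarrow> path_homotopic X p r"
  unfolding path_homotopic_def by (auto intro: homotopic_with_trans)

lemma path_homotopic_eq_on:
  assumes p: "pathin X p" and eq: "\<And>t. t \<in> {0..1} \<Longrightarrow> p t = q t"
  shows "path_homotopic X p q"
  by (rule path_homotopicI[where H = "\<lambda>z. p (snd z)"])
     (use continuous_map_square_snd[OF p] eq in auto)

lemma path_homotopic_eq_on_trans:
  "path_homotopic X p q \<Longrightarrow> (\<And>t. t \<in> {0..1} \<Longrightarrow> q t = r t) \<Longrightarrow> path_homotopic X p r"
  by (meson path_homotopicD(2) path_homotopic_eq_on path_homotopic_trans)

text \<open>Any two paths in the square with common endpoints are homotopic through the linear
  homotopy, which stays in the convex square; mapping it by \<open>F\<close> gives the path homotopy.\<close>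
lemma path_homotopic_compose_square:
  assumes F: "continuous_map (top_of_set unit_square) X F"
    and P: "continuous_on {0..1} P" "P ` {0..1} \<subseteq> unit_square"
    and Q: "continuous_on {0..1} Q" "Q ` {0..1} \<subseteq> unit_square"
    and ends: "P 0 = Q 0" "P 1 = Q 1"
  shows "path_homotopic X (F \<circ> P) (F \<circ> Q)"
proof -
  define K where "K z = (1 - fst z) *\<^sub>R P (snd z) + fst z *\<^sub>R Q (snd z)" for z :: "real \<times> real"
  have K_in: "K z \<in> unit_square" if "z \<in> unit_square" for z
  proof -
    have "P (snd z) \<in> unit_square" "Q (snd z) \<in> unit_square" "fst z \<in> {0..1}"
      using that P(2) Q(2) by (auto simp: image_subset_iff mem_Times_iff)
    then show ?thesis
      unfolding K_def using convexD_alt[OF convex_Times[OF convex_real_interval(5) convex_real_interval(5)]]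
      by (metis atLeastAtMost_iff)
  qed
  have "continuous_on unit_square K"
    unfolding K_def
    by (intro continuous_intros continuous_on_compose2[OF P(1)] continuous_on_compose2[OF Q(1)])
       (auto simp: mem_Times_iff)
  then have "continuous_map (top_of_set unit_square) X (\<lambda>z. F (K z))"
    using K_in by (intro continuous_map_compose_top_of_set[OF F] image_subsetI)
  then show ?thesis
    by (rule path_homotopicI) (auto simp: K_def ends scaleR_left_diff_distrib)
qed

lemma continuous_map_paste_square:
  assumes A: "continuous_map (top_of_set unit_square) X A"
    and B: "continuous_map (top_of_set unit_square) X B"
    and AB: "\<And>s. s \<in> {0..1} \<Longrightarrow> A (s, 1) = B (s, 0)"
  shows "continuous_map (top_of_set unit_square) X
           (\<lambda>z. if snd z \<le> 1/2 then A (fst z, 2 * snd z) else B (fst z, 2 * snd z - 1))"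
proof (rule continuous_map_cases_le)
  show "continuous_map (top_of_set unit_square) euclideanreal snd"
    by (simp add: continuous_on_snd)
  show "continuous_map (subtopology (top_of_set unit_square)
          {z \<in> topspace (top_of_set unit_square). snd z \<le> 1/2}) X (\<lambda>z. A (fst z, 2 * snd z))"
    unfolding subtopology_subtopology
    by (rule continuous_map_compose_top_of_set[OF A]) (auto intro!: continuous_intros simp: mem_Times_iff)
  show "continuous_map (subtopology (top_of_set unit_square)
          {z \<in> topspace (top_of_set unit_square). 1/2 \<le> snd z}) X (\<lambda>z. B (fst z, 2 * snd z - 1))"
    unfolding subtopology_subtopology
    by (rule continuous_map_compose_top_of_set[OF B]) (auto intro!: continuous_intros simp: mem_Times_iff)
  show "A (fst z, 2 * snd z) = B (fst z, 2 * snd z - 1)"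
    if "z \<in> topspace (top_of_set unit_square)" "snd z = 1/2" for z
  proof -
    have "2 * snd z = 1" "2 * snd z - 1 = 0" using that(2) by auto
    then show ?thesis using that(1) AB[of "fst z"] by (simp add: mem_Times_iff)
  qed
qed auto

lemma pjoin_0 [simp]: "pjoin p q 0 = p 0"
  and pjoin_1 [simp]: "pjoin p q 1 = q 1"
  by (simp_all add: pjoin_def)

lemma preverse_0 [simp]: "preverse p 0 = p 1"
  and preverse_1 [simp]: "preverse p 1 = p 0"
  by (simp_all add: preverse_def)

lemma path_homotopic_pjoin:
  assumes "path_homotopic X p p'" "path_homotopic X q q'" "p 1 = q 0"
  shows "path_homotopic X (pjoin p q) (pjoin p' q')"
proof -
  obtain H where H: "continuous_map (top_of_set unit_square) X H"
    "\<And>t. H (0, t) = p t" "\<And>t. H (1, t) = p' t"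
    "\<And>s. s \<in> {0..1} \<Longrightarrow> H (s, 0) = p 0" "\<And>s. s \<in> {0..1} \<Longrightarrow> H (s, 1) = p 1"
    using path_homotopicE[OF assms(1)] by blast
  obtain K where K: "continuous_map (top_of_set unit_square) X K"
    "\<And>t. K (0, t) = q t" "\<And>t. K (1, t) = q' t"
    "\<And>s. s \<in> {0..1} \<Longrightarrow> K (s, 0) = q 0" "\<And>s. s \<in> {0..1} \<Longrightarrow> K (s, 1) = q 1"
    using path_homotopicE[OF assms(2)] by blast
  show ?thesis
    by (rule path_homotopicI[OF continuous_map_paste_square[OF H(1) K(1)]])
       (use H K assms(3) in \<open>auto simp: pjoin_def\<close>)
qed

lemma pathin_pjoin: "pathin X p \<Longrightarrow> pathin X q \<Longrightarrow> p 1 = q 0 \<Longrightarrow> pathin X (pjoin p q)"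
  by (meson path_homotopicD(1) path_homotopic_pjoin path_homotopic_refl)

lemma path_homotopic_preverse:
  assumes "path_homotopic X p q"
  shows "path_homotopic X (preverse p) (preverse q)"
proof -
  obtain H where H: "continuous_map (top_of_set unit_square) X H"
    "\<And>t. H (0, t) = p t" "\<And>t. H (1, t) = q t"
    "\<And>s. s \<in> {0..1} \<Longrightarrow> H (s, 0) = p 0" "\<And>s. s \<in> {0..1} \<Longrightarrow> H (s, 1) = p 1"
    using path_homotopicE[OF assms] by blast
  have "continuous_map (top_of_set unit_square) X (\<lambda>z. H (fst z, 1 - snd z))"
    by (rule continuous_map_compose_top_of_set[OF H(1)])
       (auto intro!: continuous_intros simp: mem_Times_iff)
  then show ?thesis
    by (rule path_homotopicI) (use H in \<open>auto simp: preverse_def\<close>)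
qed

lemma pathin_preverse: "pathin X p \<Longrightarrow> pathin X (preverse p)"
  by (meson path_homotopicD(1) path_homotopic_preverse path_homotopic_refl)

lemma path_homotopic_reparam:
  assumes p: "pathin X p"
    and f: "continuous_on {0..1} f" "f ` {0..1} \<subseteq> {0..1}"
    and g: "continuous_on {0..1} g" "g ` {0..1} \<subseteq> {0..1}"
    and ends: "f 0 = g 0" "f 1 = g 1"
  shows "path_homotopic X (p \<circ> f) (p \<circ> g)"
proof -
  have "continuous_on {0..1} (\<lambda>t. (f t, 0::real))" "continuous_on {0..1} (\<lambda>t. (g t, 0::real))"
    using f(1) g(1) by (auto intro: continuous_on_Pair)
  then show ?thesis
    using path_homotopic_compose_square[OF continuous_map_square_fst[OF p],
        of "\<lambda>t. (f t, 0)" "\<lambda>t. (g t, 0)"] f(2) g(2) ends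
    by (auto simp: image_subset_iff o_def)
qed

lemma path_homotopic_pjoin_const_left:
  assumes "pathin X p"
  shows "path_homotopic X (pjoin (\<lambda>t. p 0) p) p"
proof -
  have "pjoin (\<lambda>t. p 0) p = p \<circ> (\<lambda>t. max 0 (2 * t - 1))"
    by (auto simp: pjoin_def fun_eq_iff max_def intro!: arg_cong[where f = p])
  moreover have "path_homotopic X (p \<circ> (\<lambda>t. max 0 (2 * t - 1))) (p \<circ> id)"
    by (rule path_homotopic_reparam[OF assms]) (auto intro!: continuous_intros)
  ultimately show ?thesis by simp
qed

lemma path_homotopic_pjoin_const_right:
  assumes "pathin X p"
  shows "path_homotopic X (pjoin p (\<lambda>t. p 1)) p"
proof -
  have "pjoin p (\<lambda>t. p 1) = p \<circ> (\<lambda>t. min 1 (2 * t))"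
    by (auto simp: pjoin_def fun_eq_iff min_def intro!: arg_cong[where f = p])
  moreover have "path_homotopic X (p \<circ> (\<lambda>t. min 1 (2 * t))) (p \<circ> id)"
    by (rule path_homotopic_reparam[OF assms]) (auto intro!: continuous_intros)
  ultimately show ?thesis by simp
qed

lemma path_homotopic_pjoin_preverse_left:
  assumes "pathin X p"
  shows "path_homotopic X (pjoin (preverse p) p) (\<lambda>t. p 1)"
proof -
  have "pjoin (preverse p) p = p \<circ> (\<lambda>t. \<bar>2 * t - 1\<bar>)"
    by (auto simp: pjoin_def preverse_def fun_eq_iff abs_if intro!: arg_cong[where f = p])
  moreover have "path_homotopic X (p \<circ> (\<lambda>t. \<bar>2 * t - 1\<bar>)) (p \<circ> (\<lambda>t. 1))"
    by (rule path_homotopic_reparam[OF assms]) (auto intro!: continuous_intros)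
  ultimately show ?thesis by (simp add: o_def)
qed

lemma path_homotopic_pjoin_assoc:
  assumes "pathin X a" "pathin X b" "pathin X c" "a 1 = b 0" "b 1 = c 0"
  shows "path_homotopic X (pjoin a (pjoin b c)) (pjoin (pjoin a b) c)"
proof -
  let ?abc = "pjoin a (pjoin b c)" and ?f = "\<lambda>t::real. min (2 * t) (min (t + 1/4) ((t + 1) / 2))"
  have "pjoin (pjoin a b) c = ?abc \<circ> ?f"
    by (auto simp: pjoin_def fun_eq_iff min_def algebra_simps intro!: arg_cong[where f = c])
  moreover have "path_homotopic X (?abc \<circ> id) (?abc \<circ> ?f)"
  proof (rule path_homotopic_reparam)
    show "pathin X ?abc" using assms by (intro pathin_pjoin) auto
    show "continuous_on {0..1} ?f" by (intro continuous_intros) auto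
  qed (auto simp: min_def)
  ultimately show ?thesis by simp
qed

lemma path_homotopic_pjoin_regroup:
  assumes "pathin X a" "pathin X b" "pathin X c" "pathin X d" "pathin X e"
    and "a 1 = b 0" "b 1 = c 0" "c 1 = d 0" "d 1 = e 0"
  shows "path_homotopic X (pjoin (pjoin a (pjoin (pjoin b c) d)) e)
                          (pjoin (pjoin (pjoin a b) c) (pjoin d e))"
proof -
  have bc: "pathin X (pjoin b c)" and abc: "pathin X (pjoin (pjoin a b) c)"
    using assms by (auto intro!: pathin_pjoin)
  have "path_homotopic X (pjoin (pjoin a (pjoin (pjoin b c) d)) e)
                         (pjoin (pjoin (pjoin a (pjoin b c)) d) e)"
    using assms bc by (intro path_homotopic_pjoin path_homotopic_pjoin_assoc path_homotopic_refl) auto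
  also have "path_homotopic X \<dots> (pjoin (pjoin (pjoin (pjoin a b) c) d) e)"
    using assms by (intro path_homotopic_pjoin path_homotopic_pjoin_assoc path_homotopic_refl) auto
  also have "path_homotopic X \<dots> (pjoin (pjoin (pjoin a b) c) (pjoin d e))"
    using assms abc by (intro path_homotopic_sym[OF path_homotopic_pjoin_assoc]) auto
  finally show ?thesis .
qed

lemma path_homotopic_pjoin_const_both:
  assumes "pathin X p"
  shows "path_homotopic X (pjoin (pjoin (\<lambda>t. p 0) p) (\<lambda>t. p 1)) p"
proof -
  have "path_homotopic X (pjoin (pjoin (\<lambda>t. p 0) p) (\<lambda>t. p 1)) (pjoin p (\<lambda>t. p 1))"
    using assms path_finish_in_topspace
    by (intro path_homotopic_pjoin path_homotopic_pjoin_const_left path_homotopic_refl) auto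
  also have "path_homotopic X \<dots> p"
    by (rule path_homotopic_pjoin_const_right[OF assms])
  finally show ?thesis .
qed

lemma path_homotopic_null_if_conjugate_null:
  assumes s: "pathin X \<sigma>" and g: "pathin X g" and "\<sigma> 1 = g 0" and loop: "g 1 = g 0"
    and null: "path_homotopic X (pjoin (pjoin \<sigma> g) (preverse \<sigma>)) (\<lambda>t. \<sigma> 0)"
  shows "path_homotopic X g (\<lambda>t. g 0)"
proof -
  let ?r = "preverse \<sigma>"
  have r: "pathin X ?r" using s by (rule pathin_preverse)
  have sg: "pathin X (pjoin \<sigma> g)" using s g \<open>\<sigma> 1 = g 0\<close> by (rule pathin_pjoin)
  have cancel: "path_homotopic X (pjoin ?r \<sigma>) (\<lambda>t. g 0)"
    using path_homotopic_pjoin_preverse_left[OF s] \<open>\<sigma> 1 = g 0\<close> by simp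
  have "path_homotopic X g (pjoin (\<lambda>t. g 0) g)"
    by (rule path_homotopic_sym[OF path_homotopic_pjoin_const_left[OF g]])
  also have "path_homotopic X \<dots> (pjoin (pjoin ?r \<sigma>) g)"
    by (rule path_homotopic_pjoin[OF path_homotopic_sym[OF cancel] path_homotopic_refl[OF g]]) simp
  also have "path_homotopic X \<dots> (pjoin ?r (pjoin \<sigma> g))"
    by (rule path_homotopic_sym[OF path_homotopic_pjoin_assoc[OF r s g]]) (simp_all add: \<open>\<sigma> 1 = g 0\<close>)
  also have "path_homotopic X \<dots> (pjoin ?r \<sigma>)"
  proof (rule path_homotopic_pjoin[OF path_homotopic_refl[OF r]])
    have "path_homotopic X (pjoin \<sigma> g) (pjoin (pjoin \<sigma> g) (\<lambda>t. g 0))"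
      using path_homotopic_sym[OF path_homotopic_pjoin_const_right[OF sg]] loop by simp
    also have "path_homotopic X \<dots> (pjoin (pjoin \<sigma> g) (pjoin ?r \<sigma>))"
      by (rule path_homotopic_pjoin[OF path_homotopic_refl[OF sg] path_homotopic_sym[OF cancel]])
         (simp add: loop)
    also have "path_homotopic X \<dots> (pjoin (pjoin (pjoin \<sigma> g) ?r) \<sigma>)"
      by (rule path_homotopic_pjoin_assoc[OF sg r s]) (simp_all add: \<open>\<sigma> 1 = g 0\<close> loop)
    also have "path_homotopic X \<dots> (pjoin (\<lambda>t. \<sigma> 0) \<sigma>)"
      by (rule path_homotopic_pjoin[OF null path_homotopic_refl[OF s]]) simp
    also have "path_homotopic X \<dots> \<sigma>"
      by (rule path_homotopic_pjoin_const_left[OF s])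
    finally show "path_homotopic X (pjoin \<sigma> g) \<sigma>" .
  qed simp
  also have "path_homotopic X \<dots> (\<lambda>t. g 0)" by (rule cancel)
  finally show ?thesis .
qed

lemma path_class_eq: "path_homotopic X p q \<Longrightarrow> path_class X p = path_class X q"
  unfolding path_class_def using path_homotopic_sym path_homotopic_trans by blast

lemma path_class_eq_on:
  "pathin X p \<Longrightarrow> (\<And>t. t \<in> {0..1} \<Longrightarrow> p t = q t) \<Longrightarrow> path_class X p = path_class X q"
  by (intro path_class_eq path_homotopic_eq_on)

lemma path_homotopic_rep_path_class:
  assumes "pathin X p"
  shows "path_homotopic X (rep (path_class X p)) p"
proof -
  have "p \<in> path_class X p"
    using assms by (simp add: path_class_def path_homotopic_refl)
  then have "rep (path_class X p) \<in> path_class X p"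
    unfolding rep_def by (rule someI[where P = "\<lambda>q. q \<in> path_class X p"])
  then show ?thesis by (simp add: path_class_def path_homotopic_sym)
qed

lemma path_class_in_fundamental_groupoid:
  "pathin X p \<Longrightarrow> path_class X p \<in> fundamental_groupoid X"
  by (auto simp: fundamental_groupoid_def)

lemma fundamental_groupoidE:
  assumes "c \<in> fundamental_groupoid X"
  obtains p where "pathin X p" "c = path_class X p"
  using assms by (auto simp: fundamental_groupoid_def)

lemma pathin_rep: "c \<in> fundamental_groupoid X \<Longrightarrow> pathin X (rep c)"
  by (metis fundamental_groupoidE path_homotopicD(1) path_homotopic_rep_path_class)

lemma path_class_rep: "c \<in> fundamental_groupoid X \<Longrightarrow> path_class X (rep c) = c"
  by (metis fundamental_groupoidE path_class_eq path_homotopic_rep_path_class)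

lemma rep_path_class_0: "pathin X p \<Longrightarrow> rep (path_class X p) 0 = p 0"
  and rep_path_class_1: "pathin X p \<Longrightarrow> rep (path_class X p) 1 = p 1"
  by (metis path_homotopicD(3,4) path_homotopic_rep_path_class)+

lemma pg_source_path_class: "pathin X p \<Longrightarrow> pg_source (path_class X p) = p 0"
  and pg_range_path_class: "pathin X p \<Longrightarrow> pg_range (path_class X p) = p 1"
  by (simp_all add: pg_source_def pg_range_def rep_path_class_0 rep_path_class_1)

lemma pg_mult_path_class:
  assumes "pathin X p" "pathin X q" "p 0 = q 1"
  shows "pg_mult X (path_class X p) (path_class X q) = path_class X (pjoin q p)"
  unfolding pg_mult_def using assms
  by (intro path_class_eq path_homotopic_pjoin path_homotopic_rep_path_class)
     (simp_all add: rep_path_class_0 rep_path_class_1)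

lemma pg_inv_path_class:
  "pathin X p \<Longrightarrow> pg_inv X (path_class X p) = path_class X (preverse p)"
  unfolding pg_inv_def by (intro path_class_eq path_homotopic_preverse path_homotopic_rep_path_class)

section \<open>The UC topology\<close>

definition inessential_open :: "'a topology \<Rightarrow> 'a set \<Rightarrow> bool" where
  "inessential_open X U \<longleftrightarrow> openin X U \<and> path_connectedin X U \<and> relatively_inessential X U"

lemma uc_nbhdE:
  assumes "x \<in> uc_nbhd X c U V"
  obtains \<delta> \<theta> where "x = path_class X (pjoin (pjoin \<theta> (rep c)) \<delta>)"
    "pathin (subtopology X U) \<delta>" "\<delta> 0 = pg_range c"
    "pathin (subtopology X V) \<theta>" "\<theta> 1 = pg_source c"
  using assms unfolding uc_nbhd_def by blast

lemma uc_nbhdI: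
  assumes "pathin (subtopology X U) \<delta>" "\<delta> 0 = pg_range c"
    and "pathin (subtopology X V) \<theta>" "\<theta> 1 = pg_source c"
    and "path_homotopic X (pjoin (pjoin \<theta> (rep c)) \<delta>) p"
  shows "path_class X p \<in> uc_nbhd X c U V"
  unfolding uc_nbhd_def using assms path_class_eq[OF assms(5)] by blast

lemma pathin_uc_nbhd_path:
  assumes "c \<in> fundamental_groupoid X"
    and "pathin (subtopology X U) \<delta>" "\<delta> 0 = pg_range c"
    and "pathin (subtopology X V) \<theta>" "\<theta> 1 = pg_source c"
  shows "pathin X (pjoin (pjoin \<theta> (rep c)) \<delta>)"
  using assms pathin_rep[OF assms(1)]
  by (intro pathin_pjoin) (auto simp: pathin_subtopology pg_source_def pg_range_def)

lemma uc_nbhd_memberD: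
  assumes c: "c \<in> fundamental_groupoid X" and x: "x \<in> uc_nbhd X c U V"
  shows "x \<in> fundamental_groupoid X" "pg_range x \<in> U" "pg_source x \<in> V"
proof -
  obtain \<delta> \<theta> where x_eq: "x = path_class X (pjoin (pjoin \<theta> (rep c)) \<delta>)"
    and \<delta>: "pathin (subtopology X U) \<delta>" "\<delta> 0 = pg_range c"
    and \<theta>: "pathin (subtopology X V) \<theta>" "\<theta> 1 = pg_source c"
    using x by (rule uc_nbhdE)
  have P: "pathin X (pjoin (pjoin \<theta> (rep c)) \<delta>)"
    using pathin_uc_nbhd_path[OF c \<delta> \<theta>] .
  show "x \<in> fundamental_groupoid X"
    using P x_eq by (simp add: path_class_in_fundamental_groupoid)
  show "pg_range x \<in> U" "pg_source x \<in> V"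
    using P x_eq \<delta>(1) \<theta>(1) by (auto simp: pg_range_path_class pg_source_path_class pathin_subtopology)
qed

lemma uc_nbhd_self:
  assumes c: "c \<in> fundamental_groupoid X" and "pg_range c \<in> U" "pg_source c \<in> V"
  shows "c \<in> uc_nbhd X c U V"
proof -
  have r: "pathin X (rep c)" using c by (rule pathin_rep)
  then have "rep c 0 \<in> topspace X" "rep c 1 \<in> topspace X"
    by (simp_all add: path_start_in_topspace path_finish_in_topspace)
  then have "path_class X (rep c) \<in> uc_nbhd X c U V"
    using assms path_homotopic_pjoin_const_both[OF r]
    by (intro uc_nbhdI[where \<delta> = "\<lambda>t. rep c 1" and \<theta> = "\<lambda>t. rep c 0"])
       (auto simp: pg_source_def pg_range_def)
  then show ?thesis using path_class_rep[OF c] by simp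
qed

text \<open>This makes the sets \<open>uc_nbhd X c U V\<close> a basis of neighbourhoods, not merely a subbasis.\<close>
lemma uc_nbhd_subset:
  assumes c: "c \<in> fundamental_groupoid X" and x: "x \<in> uc_nbhd X c U V"
  shows "uc_nbhd X x U V \<subseteq> uc_nbhd X c U V"
proof
  fix y assume y: "y \<in> uc_nbhd X x U V"
  obtain \<delta>0 \<theta>0 where x_eq: "x = path_class X (pjoin (pjoin \<theta>0 (rep c)) \<delta>0)"
    and \<delta>0: "pathin (subtopology X U) \<delta>0" "\<delta>0 0 = pg_range c"
    and \<theta>0: "pathin (subtopology X V) \<theta>0" "\<theta>0 1 = pg_source c"
    using x by (rule uc_nbhdE)
  obtain \<delta> \<theta> where y_eq: "y = path_class X (pjoin (pjoin \<theta> (rep x)) \<delta>)"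
    and \<delta>: "pathin (subtopology X U) \<delta>" "\<delta> 0 = pg_range x"
    and \<theta>: "pathin (subtopology X V) \<theta>" "\<theta> 1 = pg_source x"
    using y by (rule uc_nbhdE)
  let ?x = "pjoin (pjoin \<theta>0 (rep c)) \<delta>0"
  have px: "pathin X ?x" using pathin_uc_nbhd_path[OF c \<delta>0 \<theta>0] .
  have ends: "\<delta> 0 = \<delta>0 1" "\<theta> 1 = \<theta>0 0"
    using \<delta>(2) \<theta>(2) px by (simp_all add: x_eq pg_range_path_class pg_source_path_class)
  have paths: "pathin X \<delta>" "pathin X \<theta>" "pathin X \<delta>0" "pathin X \<theta>0" "pathin X (rep c)"
    using \<delta> \<theta> \<delta>0 \<theta>0 pathin_rep[OF c] by (auto simp: pathin_subtopology)
  have "path_homotopic X (pjoin (pjoin \<theta> (rep x)) \<delta>) (pjoin (pjoin \<theta> ?x) \<delta>)"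
    using paths ends px path_homotopic_rep_path_class[OF px]
    by (intro path_homotopic_pjoin path_homotopic_refl)
       (auto simp: x_eq rep_path_class_0 rep_path_class_1)
  also have "path_homotopic X \<dots> (pjoin (pjoin (pjoin \<theta> \<theta>0) (rep c)) (pjoin \<delta>0 \<delta>))"
    using paths ends \<delta>0(2) \<theta>0(2)
    by (intro path_homotopic_pjoin_regroup) (auto simp: pg_source_def pg_range_def)
  finally have "path_homotopic X (pjoin (pjoin (pjoin \<theta> \<theta>0) (rep c)) (pjoin \<delta>0 \<delta>))
                                 (pjoin (pjoin \<theta> (rep x)) \<delta>)"
    by (rule path_homotopic_sym)
  moreover have "pathin (subtopology X U) (pjoin \<delta>0 \<delta>)"
    using pathin_pjoin[OF \<delta>0(1) \<delta>(1)] ends by simp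
  moreover have "pathin (subtopology X V) (pjoin \<theta> \<theta>0)"
    using pathin_pjoin[OF \<theta>(1) \<theta>0(1)] ends by simp
  ultimately show "y \<in> uc_nbhd X c U V"
    using y_eq \<delta>0(2) \<theta>0(2) uc_nbhdI[of X U "pjoin \<delta>0 \<delta>" c V "pjoin \<theta> \<theta>0"] by simp
qed

lemma path_class_const_in_uc_nbhd:
  assumes \<sigma>: "pathin X \<sigma>" "\<sigma> \<in> {0..1} \<rightarrow> U \<inter> V"
  shows "path_class X (\<lambda>t. \<sigma> 1) \<in> uc_nbhd X (path_class X (\<lambda>t. \<sigma> 0)) U V"
proof -
  let ?x = "\<sigma> 0"
  have const: "pathin X (\<lambda>t. ?x)" using \<sigma>(1) by (simp add: path_start_in_topspace)
  have "path_homotopic X (pjoin (pjoin (preverse \<sigma>) (rep (path_class X (\<lambda>t. ?x)))) \<sigma>)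
                         (pjoin (pjoin (preverse \<sigma>) (\<lambda>t. preverse \<sigma> 1)) \<sigma>)"
    using \<sigma> const path_homotopic_rep_path_class[OF const]
    by (intro path_homotopic_pjoin path_homotopic_refl pathin_preverse)
       (auto simp: rep_path_class_0 rep_path_class_1)
  also have "path_homotopic X \<dots> (pjoin (preverse \<sigma>) \<sigma>)"
    using \<sigma> by (intro path_homotopic_pjoin path_homotopic_pjoin_const_right pathin_preverse
        path_homotopic_refl) auto
  also have "path_homotopic X \<dots> (\<lambda>t. \<sigma> 1)"
    by (rule path_homotopic_pjoin_preverse_left[OF \<sigma>(1)])
  finally have "path_homotopic X (pjoin (pjoin (preverse \<sigma>) (rep (path_class X (\<lambda>t. ?x)))) \<sigma>)
                                 (\<lambda>t. \<sigma> 1)" .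
  moreover have "pathin (subtopology X V) (preverse \<sigma>)" "pathin (subtopology X U) \<sigma>"
    using \<sigma> pathin_preverse[OF \<sigma>(1)] by (auto simp: pathin_subtopology preverse_def)
  ultimately show ?thesis
    using const
    by (intro uc_nbhdI[where \<delta> = \<sigma> and \<theta> = "preverse \<sigma>"])
       (auto simp: pg_range_path_class pg_source_path_class)
qed

lemma openin_uc_nbhd:
  assumes "c \<in> fundamental_groupoid X"
    and "inessential_open X U" "pg_range c \<in> U" "inessential_open X V" "pg_source c \<in> V"
  shows "openin (uc_topology X) (uc_nbhd X c U V)"
  unfolding uc_topology_def
  by (rule topology_generated_by_Basis) (use assms in \<open>auto simp: uc_basis_def inessential_open_def\<close>)

lemma topspace_uc_topology_subset: "topspace (uc_topology X) \<subseteq> fundamental_groupoid X"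
proof
  fix x assume "x \<in> topspace (uc_topology X)"
  then obtain B where "B \<in> uc_basis X" "x \<in> B"
    unfolding uc_topology_def topology_generated_by_topspace by blast
  then obtain c U V where "c \<in> fundamental_groupoid X" "x \<in> uc_nbhd X c U V"
    unfolding uc_basis_def by blast
  then show "x \<in> fundamental_groupoid X" by (rule uc_nbhd_memberD(1))
qed

locale uc_space =
  fixes X :: "'a topology"
  assumes locally_path_connected: "locally_path_connected_space X"
    and semilocally_simply_connected: "semilocally_simply_connected X"
begin

text \<open>If loops at \<open>x\<close> in \<open>V\<close> are null, so are loops in a path-connected \<open>U \<subseteq> V\<close> at any
  \<open>y \<in> U\<close>: conjugated by a path from \<open>x\<close> to \<open>y\<close> in \<open>U\<close>, they become loops at \<open>x\<close> in \<open>V\<close>.\<close>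
lemma exists_inessential_open:
  assumes W: "openin X W" "x \<in> W"
  shows "\<exists>U. inessential_open X U \<and> x \<in> U \<and> U \<subseteq> W"
proof -
  have "x \<in> topspace X" using W openin_subset by blast
  then obtain V where V: "openin X V" "x \<in> V" "null_loop_at X V x"
    using semilocally_simply_connected unfolding semilocally_simply_connected_def by blast
  obtain U where U: "openin X U" "path_connectedin X U" "x \<in> U" "U \<subseteq> V \<inter> W"
    using locally_path_connected V W unfolding locally_path_connected_space by (meson openin_Int IntI)
  have "null_loop_at X U y" if "y \<in> U" for y
    unfolding null_loop_at_def
  proof (intro allI impI)
    fix g assume g: "pathin (subtopology X U) g \<and> g 0 = y \<and> g 1 = y"
    obtain \<sigma> where \<sigma>: "pathin X \<sigma>" "\<sigma> \<in> {0..1} \<rightarrow> U" "\<sigma> 0 = x" "\<sigma> 1 = y"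
      using U(2,3) \<open>y \<in> U\<close> unfolding path_connectedin by blast
    have \<sigma>U: "pathin (subtopology X U) \<sigma>" using \<sigma> by (auto simp: pathin_subtopology)
    have "pathin (subtopology X U) (pjoin (pjoin \<sigma> g) (preverse \<sigma>))"
      using g \<sigma>U \<sigma> by (intro pathin_pjoin pathin_preverse) auto
    then have "pathin (subtopology X V) (pjoin (pjoin \<sigma> g) (preverse \<sigma>))"
      using U(4) by (auto simp: pathin_subtopology)
    then have "path_homotopic X (pjoin (pjoin \<sigma> g) (preverse \<sigma>)) (\<lambda>t. \<sigma> 0)"
      using V(3) \<sigma> unfolding null_loop_at_def by simp
    then have "path_homotopic X g (\<lambda>t. g 0)"
      using g \<sigma> by (intro path_homotopic_null_if_conjugate_null[OF \<sigma>(1)])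
                      (auto simp: pathin_subtopology)
    then show "path_homotopic X g (\<lambda>t. y)" using g by simp
  qed
  then have "inessential_open X U"
    using U openin_subset by (auto simp: inessential_open_def relatively_inessential_def)
  then show ?thesis using U by blast
qed

lemma topspace_uc_topology: "topspace (uc_topology X) = fundamental_groupoid X"
proof
  show "topspace (uc_topology X) \<subseteq> fundamental_groupoid X"
    by (rule topspace_uc_topology_subset)
  show "fundamental_groupoid X \<subseteq> topspace (uc_topology X)"
  proof
    fix c assume c: "c \<in> fundamental_groupoid X"
    have "pg_range c \<in> topspace X" "pg_source c \<in> topspace X"
      using pathin_rep[OF c] by (simp_all add: pg_range_def pg_source_def
          path_finish_in_topspace path_start_in_topspace)
    then obtain U V where UV: "inessential_open X U" "pg_range c \<in> U"
      "inessential_open X V" "pg_source c \<in> V"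
      using exists_inessential_open[OF openin_topspace] by blast
    have "c \<in> uc_nbhd X c U V" using uc_nbhd_self[OF c UV(2,4)] .
    then show "c \<in> topspace (uc_topology X)"
      using openin_subset[OF openin_uc_nbhd[OF c UV]] by blast
  qed
qed

lemma continuous_map_into_uc_topology:
  assumes f: "f \<in> topspace T \<rightarrow> fundamental_groupoid X"
    and local: "\<And>x U V. \<lbrakk>x \<in> topspace T; inessential_open X U; pg_range (f x) \<in> U;
                        inessential_open X V; pg_source (f x) \<in> V\<rbrakk>
                 \<Longrightarrow> \<exists>W. openin T W \<and> x \<in> W \<and> f ` W \<subseteq> uc_nbhd X (f x) U V"
  shows "continuous_map T (uc_topology X) f"
  unfolding uc_topology_def
proof (rule continuous_on_generated_topo)
  show "f ` topspace T \<subseteq> \<Union> (uc_basis X)"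
    using f topspace_uc_topology by (auto simp: uc_topology_def)
  fix B assume "B \<in> uc_basis X"
  then obtain c U V where B: "B = uc_nbhd X c U V" "c \<in> fundamental_groupoid X"
    and UV: "inessential_open X U" "inessential_open X V"
    unfolding uc_basis_def inessential_open_def by blast
  show "openin T (f -` B \<inter> topspace T)"
  proof (subst openin_subopen, intro ballI)
    fix x assume x: "x \<in> f -` B \<inter> topspace T"
    then have fx: "f x \<in> uc_nbhd X c U V" using B by simp
    obtain W where W: "openin T W" "x \<in> W" "f ` W \<subseteq> uc_nbhd X (f x) U V"
      using local[of x U V] x UV uc_nbhd_memberD[OF B(2) fx] by blast
    then have "W \<subseteq> f -` B \<inter> topspace T"
      using uc_nbhd_subset[OF B(2) fx] B(1) openin_subset by fastforce
    then show "\<exists>W. openin T W \<and> x \<in> W \<and> W \<subseteq> f -` B \<inter> topspace T"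
      using W by blast
  qed
qed

lemma continuous_map_pg_source: "continuous_map (uc_topology X) X pg_source"
  unfolding continuous_map_def
proof (intro conjI allI impI)
  show "pg_source \<in> topspace (uc_topology X) \<rightarrow> topspace X"
    using pathin_rep path_start_in_topspace by (fastforce simp: topspace_uc_topology pg_source_def)
  fix W assume W: "openin X W"
  show "openin (uc_topology X) {d \<in> topspace (uc_topology X). pg_source d \<in> W}"
  proof (subst openin_subopen, intro ballI)
    fix d assume "d \<in> {d \<in> topspace (uc_topology X). pg_source d \<in> W}"
    then have d: "d \<in> fundamental_groupoid X" and "pg_source d \<in> W"
      using topspace_uc_topology by auto
    then obtain V where V: "inessential_open X V" "pg_source d \<in> V" "V \<subseteq> W"
      using W exists_inessential_open by blast
    have "pg_range d \<in> topspace X"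
      using pathin_rep[OF d] by (simp add: pg_range_def path_finish_in_topspace)
    then obtain U where U: "inessential_open X U" "pg_range d \<in> U"
      using exists_inessential_open[OF openin_topspace] by blast
    have "uc_nbhd X d U V \<subseteq> {d \<in> topspace (uc_topology X). pg_source d \<in> W}"
      using uc_nbhd_memberD[OF d] V(3) topspace_uc_topology by auto
    then show "\<exists>N. openin (uc_topology X) N \<and> d \<in> N \<and>
                   N \<subseteq> {d \<in> topspace (uc_topology X). pg_source d \<in> W}"
      using openin_uc_nbhd[OF d U V(1,2)] uc_nbhd_self[OF d U(2) V(2)] by blast
  qed
qed


lemma continuous_map_const_path_class:
  "continuous_map X (uc_topology X) (\<lambda>x. path_class X (\<lambda>t. x))"
proof (rule continuous_map_into_uc_topology)
  show "(\<lambda>x. path_class X (\<lambda>t. x)) \<in> topspace X \<rightarrow> fundamental_groupoid X"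
    by (simp add: path_class_in_fundamental_groupoid)
  fix x U V
  assume x: "x \<in> topspace X" and U: "inessential_open X U" "pg_range (path_class X (\<lambda>t. x)) \<in> U"
    and V: "inessential_open X V" "pg_source (path_class X (\<lambda>t. x)) \<in> V"
  have "x \<in> U \<inter> V" "openin X (U \<inter> V)"
    using x U V by (auto simp: pg_range_path_class pg_source_path_class inessential_open_def)
  then obtain W where W: "inessential_open X W" "x \<in> W" "W \<subseteq> U \<inter> V"
    using exists_inessential_open by blast
  have "path_class X (\<lambda>t. y) \<in> uc_nbhd X (path_class X (\<lambda>t. x)) U V" if "y \<in> W" for y
  proof -
    obtain \<sigma> where "pathin X \<sigma>" "\<sigma> \<in> {0..1} \<rightarrow> W" "\<sigma> 0 = x" "\<sigma> 1 = y"
      using W \<open>y \<in> W\<close> unfolding inessential_open_def path_connectedin by blast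
    then show ?thesis
      using path_class_const_in_uc_nbhd[of X \<sigma> U V] W(3) by blast
  qed
  then show "\<exists>W'. openin X W' \<and> x \<in> W' \<and> (\<lambda>x. path_class X (\<lambda>t. x)) ` W' \<subseteq>
                  uc_nbhd X (path_class X (\<lambda>t. x)) U V"
    using W by (auto simp: inessential_open_def)
qed

end

section \<open>Pointwise multiplication of paths\<close>

locale top_group =
  fixes X :: "'a topology" and G :: "'a monoid" (structure)
  assumes topological_group: "topological_group X G"
begin

sublocale group G
  using topological_group by (simp add: topological_group_def)

lemma carrier_eq_topspace: "carrier G = topspace X"
  using topological_group by (simp add: topological_group_def)

lemma continuous_map_mult:
  assumes "continuous_map Z X f" "continuous_map Z X g"
  shows "continuous_map Z X (\<lambda>z. f z \<otimes> g z)"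
proof -
  have "continuous_map Z (prod_topology X X) (\<lambda>z. (f z, g z))"
    using assms by (simp add: continuous_map_paired)
  moreover have "continuous_map (prod_topology X X) X (\<lambda>(x, y). x \<otimes> y)"
    using topological_group by (simp add: topological_group_def)
  ultimately have "continuous_map Z X ((\<lambda>(x, y). x \<otimes> y) \<circ> (\<lambda>z. (f z, g z)))"
    by (rule continuous_map_compose)
  then show ?thesis by (simp add: o_def)
qed

lemma continuous_map_inv:
  assumes "continuous_map Z X f"
  shows "continuous_map Z X (\<lambda>z. inv (f z))"
proof -
  have "continuous_map X X (\<lambda>x. inv x)"
    using topological_group by (simp add: topological_group_def)
  with assms have "continuous_map Z X ((\<lambda>x. inv x) \<circ> f)"
    by (rule continuous_map_compose)
  then show ?thesis by (simp add: o_def)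
qed

lemma pathin_mult: "pathin X p \<Longrightarrow> pathin X q \<Longrightarrow> pathin X (\<lambda>t. p t \<otimes> q t)"
  unfolding pathin_def by (rule continuous_map_mult)

lemma pathin_inv: "pathin X p \<Longrightarrow> pathin X (\<lambda>t. inv (p t))"
  unfolding pathin_def by (rule continuous_map_inv)

lemma pathin_mult_const: "pathin X p \<Longrightarrow> g \<in> carrier G \<Longrightarrow> pathin X (\<lambda>t. p t \<otimes> g)"
  by (simp add: pathin_mult carrier_eq_topspace)

lemma path_in_carrier: "pathin X p \<Longrightarrow> t \<in> {0..1} \<Longrightarrow> p t \<in> carrier G"
  by (auto simp: carrier_eq_topspace pathin_def continuous_map_def)

lemma mult_open_nbhds:
  assumes U: "openin X U" and "a \<in> carrier G" "b \<in> carrier G" "a \<otimes> b \<in> U"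
  shows "\<exists>U1 U2. openin X U1 \<and> openin X U2 \<and> a \<in> U1 \<and> b \<in> U2 \<and> (\<forall>x\<in>U1. \<forall>y\<in>U2. x \<otimes> y \<in> U)"
proof -
  define S where "S = {z \<in> topspace (prod_topology X X). fst z \<otimes> snd z \<in> U}"
  have "continuous_map (prod_topology X X) X (\<lambda>z. fst z \<otimes> snd z)"
    by (intro continuous_map_mult continuous_map_fst continuous_map_snd)
  then have "openin (prod_topology X X) S"
    unfolding S_def using U by (rule openin_continuous_map_preimage)
  moreover have "(a, b) \<in> S" using assms by (simp add: S_def carrier_eq_topspace)
  ultimately have "\<exists>U1 U2. openin X U1 \<and> openin X U2 \<and> a \<in> U1 \<and> b \<in> U2 \<and> U1 \<times> U2 \<subseteq> S"
    unfolding openin_prod_topology_alt by (elim allE impE)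
  then obtain U1 U2 where U12: "openin X U1" "openin X U2" "a \<in> U1" "b \<in> U2"
    and sub: "U1 \<times> U2 \<subseteq> S"
    by blast
  have "x \<otimes> y \<in> U" if "x \<in> U1" "y \<in> U2" for x y
  proof -
    have "(x, y) \<in> S" using sub that by blast
    then show ?thesis by (simp add: S_def)
  qed
  then show ?thesis using U12 by blast
qed

lemma path_homotopic_mult:
  assumes "path_homotopic X p p'" "path_homotopic X q q'"
  shows "path_homotopic X (\<lambda>t. p t \<otimes> q t) (\<lambda>t. p' t \<otimes> q' t)"
proof -
  obtain H where H: "continuous_map (top_of_set unit_square) X H"
    "\<And>t. H (0, t) = p t" "\<And>t. H (1, t) = p' t"
    "\<And>s. s \<in> {0..1} \<Longrightarrow> H (s, 0) = p 0" "\<And>s. s \<in> {0..1} \<Longrightarrow> H (s, 1) = p 1"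
    using path_homotopicE[OF assms(1)] by blast
  obtain K where K: "continuous_map (top_of_set unit_square) X K"
    "\<And>t. K (0, t) = q t" "\<And>t. K (1, t) = q' t"
    "\<And>s. s \<in> {0..1} \<Longrightarrow> K (s, 0) = q 0" "\<And>s. s \<in> {0..1} \<Longrightarrow> K (s, 1) = q 1"
    using path_homotopicE[OF assms(2)] by blast
  show ?thesis
    by (rule path_homotopicI[OF continuous_map_mult[OF H(1) K(1)]]) (simp_all add: H K)
qed

lemma path_homotopic_inv:
  assumes "path_homotopic X p q"
  shows "path_homotopic X (\<lambda>t. inv (p t)) (\<lambda>t. inv (q t))"
proof -
  obtain H where H: "continuous_map (top_of_set unit_square) X H"
    "\<And>t. H (0, t) = p t" "\<And>t. H (1, t) = q t"
    "\<And>s. s \<in> {0..1} \<Longrightarrow> H (s, 0) = p 0" "\<And>s. s \<in> {0..1} \<Longrightarrow> H (s, 1) = p 1"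
    using path_homotopicE[OF assms] by blast
  show ?thesis
    by (rule path_homotopicI[OF continuous_map_inv[OF H(1)]]) (simp_all add: H)
qed


lemma path_homotopic_mult_const:
  "path_homotopic X p q \<Longrightarrow> g \<in> carrier G \<Longrightarrow> path_homotopic X (\<lambda>t. p t \<otimes> g) (\<lambda>t. q t \<otimes> g)"
  using carrier_eq_topspace by (simp add: path_homotopic_mult path_homotopic_refl)

text \<open>Move the diagonal of the square \<open>(s, t) \<mapsto> \<eta> s \<otimes> \<gamma> t\<close> onto its left and top edges;
  the left edge is \<open>\<gamma>\<close> because \<open>\<eta> 0 = \<one>\<close>.\<close>
lemma path_homotopic_mult_pjoin:
  assumes \<eta>: "pathin X \<eta>" and \<gamma>: "pathin X \<gamma>" and "\<eta> 0 = \<one>"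
  shows "path_homotopic X (\<lambda>t. \<eta> t \<otimes> \<gamma> t) (pjoin \<gamma> (\<lambda>t. \<eta> t \<otimes> \<gamma> 1))"
proof -
  define F where "F z = \<eta> (fst z) \<otimes> \<gamma> (snd z)" for z
  define Q where "Q t = (max 0 (2 * t - 1), min 1 (2 * t))" for t :: real
  have F: "continuous_map (top_of_set unit_square) X F"
    unfolding F_def by (intro continuous_map_mult continuous_map_square_fst continuous_map_square_snd \<eta> \<gamma>)
  have "continuous_on {0..1} Q" unfolding Q_def by (intro continuous_intros)
  then have diag: "path_homotopic X (F \<circ> (\<lambda>t. (t, t))) (F \<circ> Q)"
    by (intro path_homotopic_compose_square[OF F]) (auto intro!: continuous_intros simp: Q_def)
  have edges: "(F \<circ> Q) t = pjoin \<gamma> (\<lambda>t. \<eta> t \<otimes> \<gamma> 1) t" if "t \<in> {0..1}" for t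
  proof (cases "t \<le> 1/2")
    case True
    then have "\<gamma> (2 * t) \<in> carrier G" using that path_in_carrier[OF \<gamma>] by simp
    with True show ?thesis using \<open>\<eta> 0 = \<one>\<close> by (simp add: F_def Q_def pjoin_def)
  qed (simp add: F_def Q_def pjoin_def)
  show ?thesis
    using path_homotopic_eq_on_trans[OF diag edges] by (simp add: F_def o_def)
qed

text \<open>Move the top edge of the square \<open>(s, t) \<mapsto> inv (\<gamma> s) \<otimes> \<gamma> t\<close> onto its left edge,
  which is the reverse of \<open>\<gamma>\<close>, followed by the diagonal, which is constant.\<close>
lemma path_homotopic_inv_mult:
  assumes \<gamma>: "pathin X \<gamma>" and "\<gamma> 0 = \<one>"
  shows "path_homotopic X (\<lambda>t. inv (\<gamma> t) \<otimes> \<gamma> 1) (preverse \<gamma>)"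
proof -
  define F where "F z = inv (\<gamma> (fst z)) \<otimes> \<gamma> (snd z)" for z
  define Q where "Q t = (max 0 (2 * t - 1), \<bar>2 * t - 1\<bar>)" for t :: real
  have F: "continuous_map (top_of_set unit_square) X F"
    unfolding F_def
    by (intro continuous_map_mult continuous_map_inv continuous_map_square_fst continuous_map_square_snd \<gamma>)
  have "continuous_on {0..1} Q" unfolding Q_def by (intro continuous_intros)
  then have top: "path_homotopic X (F \<circ> (\<lambda>t. (t, 1))) (F \<circ> Q)"
    by (intro path_homotopic_compose_square[OF F]) (auto intro!: continuous_intros simp: Q_def)
  have edges: "(F \<circ> Q) t = pjoin (preverse \<gamma>) (\<lambda>t. preverse \<gamma> 1) t" if "t \<in> {0..1}" for t
  proof (cases "t \<le> 1/2")
    case True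
    then have "\<gamma> (1 - 2 * t) \<in> carrier G" using that path_in_carrier[OF \<gamma>] by simp
    with True show ?thesis using \<open>\<gamma> 0 = \<one>\<close> by (simp add: F_def Q_def pjoin_def preverse_def)
  next
    case False
    then have "\<gamma> (2 * t - 1) \<in> carrier G" using that path_in_carrier[OF \<gamma>] by simp
    with False show ?thesis using \<open>\<gamma> 0 = \<one>\<close> by (simp add: F_def Q_def pjoin_def preverse_def)
  qed
  have "path_homotopic X (\<lambda>t. inv (\<gamma> t) \<otimes> \<gamma> 1) (pjoin (preverse \<gamma>) (\<lambda>t. preverse \<gamma> 1))"
    using path_homotopic_eq_on_trans[OF top edges] by (simp add: F_def o_def)
  also have "path_homotopic X \<dots> (preverse \<gamma>)"
    by (rule path_homotopic_pjoin_const_right[OF pathin_preverse[OF \<gamma>]])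
  finally show ?thesis .
qed


lemma pathin_subtopology_mult:
  assumes "pathin (subtopology X U1) p" "pathin (subtopology X U2) q"
    and "\<And>x y. x \<in> U1 \<Longrightarrow> y \<in> U2 \<Longrightarrow> x \<otimes> y \<in> U"
  shows "pathin (subtopology X U) (\<lambda>t. p t \<otimes> q t)"
  using assms by (auto simp: pathin_subtopology intro: pathin_mult)

lemma ucg_mult_path_class:
  "pathin X p \<Longrightarrow> pathin X q \<Longrightarrow>
     ucg_mult X G (path_class X p) (path_class X q) = path_class X (\<lambda>t. p t \<otimes> q t)"
  unfolding ucg_mult_def by (intro path_class_eq path_homotopic_mult path_homotopic_rep_path_class)

lemma ucg_inv_path_class:
  "pathin X p \<Longrightarrow> ucg_inv X G (path_class X p) = path_class X (\<lambda>t. inv (p t))"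
  unfolding ucg_inv_def by (intro path_class_eq path_homotopic_inv path_homotopic_rep_path_class)

lemma J_map_path_class:
  "pathin X p \<Longrightarrow> g \<in> carrier G \<Longrightarrow> J_map X G (path_class X p, g) = path_class X (\<lambda>t. p t \<otimes> g)"
  unfolding J_map_def
  by (intro path_class_eq path_homotopic_mult)
     (simp_all add: carrier_eq_topspace path_homotopic_rep_path_class path_homotopic_refl)

lemma ucg_mult_in_uc_nbhd:
  assumes a: "a \<in> fundamental_groupoid X" and b: "b \<in> fundamental_groupoid X"
    and a': "a' \<in> uc_nbhd X a U1 V1" and b': "b' \<in> uc_nbhd X b U2 V2"
    and U: "\<And>x y. x \<in> U1 \<Longrightarrow> y \<in> U2 \<Longrightarrow> x \<otimes> y \<in> U"
    and V: "\<And>x y. x \<in> V1 \<Longrightarrow> y \<in> V2 \<Longrightarrow> x \<otimes> y \<in> V"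
  shows "ucg_mult X G a' b' \<in> uc_nbhd X (ucg_mult X G a b) U V"
proof -
  obtain \<delta>1 \<theta>1 where a'_eq: "a' = path_class X (pjoin (pjoin \<theta>1 (rep a)) \<delta>1)"
    and \<delta>1: "pathin (subtopology X U1) \<delta>1" "\<delta>1 0 = pg_range a"
    and \<theta>1: "pathin (subtopology X V1) \<theta>1" "\<theta>1 1 = pg_source a"
    using a' by (rule uc_nbhdE)
  obtain \<delta>2 \<theta>2 where b'_eq: "b' = path_class X (pjoin (pjoin \<theta>2 (rep b)) \<delta>2)"
    and \<delta>2: "pathin (subtopology X U2) \<delta>2" "\<delta>2 0 = pg_range b"
    and \<theta>2: "pathin (subtopology X V2) \<theta>2" "\<theta>2 1 = pg_source b"
    using b' by (rule uc_nbhdE)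
  let ?\<alpha>\<beta> = "\<lambda>t. rep a t \<otimes> rep b t"
  let ?\<delta> = "\<lambda>t. \<delta>1 t \<otimes> \<delta>2 t" and ?\<theta> = "\<lambda>t. \<theta>1 t \<otimes> \<theta>2 t"
  have \<alpha>\<beta>: "pathin X ?\<alpha>\<beta>" using a b by (intro pathin_mult pathin_rep)
  have ab_eq: "ucg_mult X G a b = path_class X ?\<alpha>\<beta>" by (simp add: ucg_mult_def)
  have "ucg_mult X G a' b' =
      path_class X (\<lambda>t. pjoin (pjoin \<theta>1 (rep a)) \<delta>1 t \<otimes> pjoin (pjoin \<theta>2 (rep b)) \<delta>2 t)"
    using a'_eq b'_eq pathin_uc_nbhd_path[OF a \<delta>1 \<theta>1] pathin_uc_nbhd_path[OF b \<delta>2 \<theta>2]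
    by (simp add: ucg_mult_path_class)
  also have "(\<lambda>t. pjoin (pjoin \<theta>1 (rep a)) \<delta>1 t \<otimes> pjoin (pjoin \<theta>2 (rep b)) \<delta>2 t) =
      pjoin (pjoin ?\<theta> ?\<alpha>\<beta>) ?\<delta>"
    by (simp add: pjoin_def fun_eq_iff)
  finally have a'b'_eq: "ucg_mult X G a' b' = path_class X (pjoin (pjoin ?\<theta> ?\<alpha>\<beta>) ?\<delta>)" .
  have \<delta>: "pathin (subtopology X U) ?\<delta>" and \<theta>: "pathin (subtopology X V) ?\<theta>"
    using pathin_subtopology_mult \<delta>1 \<delta>2 \<theta>1 \<theta>2 U V by blast+
  have ends: "?\<delta> 0 = ?\<alpha>\<beta> 1" "?\<theta> 1 = ?\<alpha>\<beta> 0"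
    using \<delta>1(2) \<delta>2(2) \<theta>1(2) \<theta>2(2) by (simp_all add: pg_range_def pg_source_def)
  have "path_homotopic X (pjoin (pjoin ?\<theta> (rep (ucg_mult X G a b))) ?\<delta>) (pjoin (pjoin ?\<theta> ?\<alpha>\<beta>) ?\<delta>)"
    using \<delta> \<theta> \<alpha>\<beta> ends path_homotopic_rep_path_class[OF \<alpha>\<beta>]
    by (intro path_homotopic_pjoin path_homotopic_refl)
       (auto simp: ab_eq rep_path_class_0 rep_path_class_1 pathin_subtopology)
  then show ?thesis
    unfolding a'b'_eq using \<delta> \<theta> ends \<alpha>\<beta>
    by (intro uc_nbhdI) (simp_all add: ab_eq pg_range_path_class pg_source_path_class)
qed

end

section \<open>The isomorphism\<close>

locale universal_covering_group = top_group + uc_space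
begin

lemma mult_inessential_nbhds:
  assumes "openin X U" "a \<in> carrier G" "b \<in> carrier G" "a \<otimes> b \<in> U"
  shows "\<exists>U1 U2. inessential_open X U1 \<and> inessential_open X U2 \<and> a \<in> U1 \<and> b \<in> U2 \<and>
           (\<forall>x\<in>U1. \<forall>y\<in>U2. x \<otimes> y \<in> U)"
proof -
  obtain U1 U2 where "openin X U1" "openin X U2" "a \<in> U1" "b \<in> U2" "\<forall>x\<in>U1. \<forall>y\<in>U2. x \<otimes> y \<in> U"
    using mult_open_nbhds[OF assms] by blast
  moreover obtain U1' U2' where "inessential_open X U1'" "a \<in> U1'" "U1' \<subseteq> U1"
    "inessential_open X U2'" "b \<in> U2'" "U2' \<subseteq> U2"
    using exists_inessential_open calculation by metis
  ultimately show ?thesis by blast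
qed

lemma continuous_map_ucg_mult:
  "continuous_map (prod_topology (uc_topology X) (uc_topology X)) (uc_topology X)
     (\<lambda>(a, b). ucg_mult X G a b)"
proof (rule continuous_map_into_uc_topology)
  show "(\<lambda>(a, b). ucg_mult X G a b)
          \<in> topspace (prod_topology (uc_topology X) (uc_topology X)) \<rightarrow> fundamental_groupoid X"
    using pathin_rep by (auto simp: ucg_mult_def topspace_uc_topology
        intro!: path_class_in_fundamental_groupoid pathin_mult)
  fix z U V
  assume z: "z \<in> topspace (prod_topology (uc_topology X) (uc_topology X))"
    and U: "inessential_open X U" "pg_range ((\<lambda>(a, b). ucg_mult X G a b) z) \<in> U"
    and V: "inessential_open X V" "pg_source ((\<lambda>(a, b). ucg_mult X G a b) z) \<in> V"
  obtain a b where ab: "z = (a, b)" "a \<in> fundamental_groupoid X" "b \<in> fundamental_groupoid X"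
    using z by (auto simp: topspace_uc_topology)
  have "pathin X (\<lambda>t. rep a t \<otimes> rep b t)"
    using ab by (simp add: pathin_mult pathin_rep)
  then have ends: "rep a 1 \<otimes> rep b 1 \<in> U" "rep a 0 \<otimes> rep b 0 \<in> V"
    using U(2) V(2) ab by (simp_all add: ucg_mult_def pg_range_path_class pg_source_path_class)
  have carrier: "rep a 0 \<in> carrier G" "rep a 1 \<in> carrier G" "rep b 0 \<in> carrier G" "rep b 1 \<in> carrier G"
    using ab by (simp_all add: path_in_carrier pathin_rep)
  obtain Ua Ub where Uab: "inessential_open X Ua" "inessential_open X Ub" "rep a 1 \<in> Ua" "rep b 1 \<in> Ub"
    "\<forall>x\<in>Ua. \<forall>y\<in>Ub. x \<otimes> y \<in> U"
    using mult_inessential_nbhds[OF _ carrier(2,4) ends(1)] U(1) by (auto simp: inessential_open_def)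
  obtain Va Vb where Vab: "inessential_open X Va" "inessential_open X Vb" "rep a 0 \<in> Va" "rep b 0 \<in> Vb"
    "\<forall>x\<in>Va. \<forall>y\<in>Vb. x \<otimes> y \<in> V"
    using mult_inessential_nbhds[OF _ carrier(1,3) ends(2)] V(1) by (auto simp: inessential_open_def)
  let ?W = "uc_nbhd X a Ua Va \<times> uc_nbhd X b Ub Vb"
  have "openin (prod_topology (uc_topology X) (uc_topology X)) ?W"
    using ab Uab Vab by (simp add: openin_prod_Times_iff openin_uc_nbhd pg_range_def pg_source_def)
  moreover have "z \<in> ?W"
    using ab Uab Vab by (simp add: uc_nbhd_self pg_range_def pg_source_def)
  moreover have "(\<lambda>(a, b). ucg_mult X G a b) ` ?W \<subseteq>
      uc_nbhd X ((\<lambda>(a, b). ucg_mult X G a b) z) U V"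
  proof (clarsimp simp: ab)
    fix a' b' assume "a' \<in> uc_nbhd X a Ua Va" "b' \<in> uc_nbhd X b Ub Vb"
    then show "ucg_mult X G a' b' \<in> uc_nbhd X (ucg_mult X G a b) U V"
      using ab Uab(5) Vab(5) by (intro ucg_mult_in_uc_nbhd) auto
  qed
  ultimately show "\<exists>W. openin (prod_topology (uc_topology X) (uc_topology X)) W \<and> z \<in> W \<and>
      (\<lambda>(a, b). ucg_mult X G a b) ` W \<subseteq> uc_nbhd X ((\<lambda>(a, b). ucg_mult X G a b) z) U V"
    by blast
qed


lemma topspace_tg_topology: "topspace (tg_topology X G) = ucg_carrier X G \<times> carrier G"
proof -
  have "ucg_carrier X G \<subseteq> fundamental_groupoid X" by (auto simp: ucg_carrier_def)
  then show ?thesis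
    by (auto simp: tg_topology_def ucg_topology_def topspace_uc_topology carrier_eq_topspace)
qed

lemma ucg_carrierE:
  assumes "c \<in> ucg_carrier X G"
  obtains p where "pathin X p" "p 0 = \<one>" "c = path_class X p"
  using assms by (auto simp: ucg_carrier_def pg_source_path_class elim: fundamental_groupoidE)

lemma J_map_eq_ucg_mult:
  assumes "c \<in> fundamental_groupoid X" "g \<in> carrier G"
  shows "J_map X G (c, g) = ucg_mult X G c (path_class X (\<lambda>t. g))"
  using assms by (auto simp: J_map_path_class ucg_mult_path_class carrier_eq_topspace
      elim!: fundamental_groupoidE)

lemma continuous_map_J_map: "continuous_map (tg_topology X G) (uc_topology X) (J_map X G)"
proof -
  have "continuous_map (tg_topology X G) (uc_topology X) fst"
    using continuous_map_fst[of "ucg_topology X G" X]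
    by (simp add: tg_topology_def ucg_topology_def continuous_map_in_subtopology)
  moreover have "continuous_map (tg_topology X G) (uc_topology X) (\<lambda>x. path_class X (\<lambda>t. snd x))"
    using continuous_map_compose[OF continuous_map_snd continuous_map_const_path_class]
    by (simp add: tg_topology_def o_def)
  ultimately have "continuous_map (tg_topology X G) (uc_topology X)
      ((\<lambda>(a, b). ucg_mult X G a b) \<circ> (\<lambda>x. (fst x, path_class X (\<lambda>t. snd x))))"
    by (intro continuous_map_compose[OF _ continuous_map_ucg_mult]) (simp add: continuous_map_paired)
  then show ?thesis
    by (rule continuous_map_eq)
       (auto simp: topspace_tg_topology J_map_eq_ucg_mult ucg_carrier_def)
qed

definition J_inverse :: "(real \<Rightarrow> 'a) set \<Rightarrow> (real \<Rightarrow> 'a) set \<times> 'a" where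
  "J_inverse d = (ucg_mult X G d (path_class X (\<lambda>t. inv (pg_source d))), pg_source d)"

lemma J_inverse_path_class:
  assumes "pathin X p"
  shows "J_inverse (path_class X p) = (path_class X (\<lambda>t. p t \<otimes> inv (p 0)), p 0)"
proof -
  have "inv (p 0) \<in> topspace X"
    using path_in_carrier[OF assms] by (simp flip: carrier_eq_topspace)
  then show ?thesis
    using assms by (simp add: J_inverse_def pg_source_path_class ucg_mult_path_class)
qed

lemma continuous_map_J_inverse: "continuous_map (uc_topology X) (tg_topology X G) J_inverse"
proof -
  have "continuous_map (uc_topology X) (uc_topology X) (\<lambda>d. path_class X (\<lambda>t. inv (pg_source d)))"
    using continuous_map_compose[OF continuous_map_inv[OF continuous_map_pg_source]
        continuous_map_const_path_class]
    by (simp add: o_def)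
  then have "continuous_map (uc_topology X) (uc_topology X)
      ((\<lambda>(a, b). ucg_mult X G a b) \<circ> (\<lambda>d. (d, path_class X (\<lambda>t. inv (pg_source d)))))"
    by (intro continuous_map_compose[OF _ continuous_map_ucg_mult]) (simp add: continuous_map_paired)
  moreover have "fst (J_inverse d) \<in> ucg_carrier X G" if d: "d \<in> fundamental_groupoid X" for d
  proof -
    obtain p where p: "pathin X p" "d = path_class X p"
      using d by (rule fundamental_groupoidE)
    have "pathin X (\<lambda>t. p t \<otimes> inv (p 0))" "p 0 \<in> carrier G"
      using p(1) path_in_carrier[OF p(1)] by (simp_all add: pathin_mult_const)
    then show ?thesis
      using p by (simp add: J_inverse_path_class ucg_carrier_def pg_source_path_class
          path_class_in_fundamental_groupoid)
  qed
  ultimately have "continuous_map (uc_topology X) (ucg_topology X G) (\<lambda>d. fst (J_inverse d))"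
    by (auto simp: ucg_topology_def continuous_map_in_subtopology J_inverse_def topspace_uc_topology o_def)
  moreover have "continuous_map (uc_topology X) X (\<lambda>d. snd (J_inverse d))"
    using continuous_map_pg_source by (simp add: J_inverse_def)
  ultimately show ?thesis
    by (simp add: tg_topology_def continuous_map_pairwise o_def)
qed

lemma J_inverse_J_map:
  assumes "c \<in> ucg_carrier X G" "g \<in> carrier G"
  shows "J_inverse (J_map X G (c, g)) = (c, g)"
proof -
  obtain p where p: "pathin X p" "p 0 = \<one>" "c = path_class X p"
    using assms(1) by (rule ucg_carrierE)
  have "path_class X (\<lambda>t. p t \<otimes> g \<otimes> inv g) = path_class X p"
    using p assms(2) path_in_carrier[OF p(1)] by (intro path_class_eq_on[symmetric]) (auto simp: m_assoc)
  then show ?thesis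
    using p assms(2) by (simp add: J_map_path_class J_inverse_path_class pathin_mult_const)
qed

lemma J_map_J_inverse:
  assumes "d \<in> fundamental_groupoid X"
  shows "J_map X G (J_inverse d) = d"
proof -
  obtain p where p: "pathin X p" "d = path_class X p"
    using assms by (rule fundamental_groupoidE)
  have p0: "p 0 \<in> carrier G" using path_in_carrier[OF p(1)] by simp
  have "path_class X (\<lambda>t. p t \<otimes> inv (p 0) \<otimes> p 0) = path_class X p"
    using p p0 path_in_carrier[OF p(1)] by (intro path_class_eq_on[symmetric]) (auto simp: m_assoc)
  then show ?thesis
    using p p0 by (simp add: J_map_path_class J_inverse_path_class pathin_mult_const)
qed


lemma pg_source_J_map:
  "c \<in> ucg_carrier X G \<Longrightarrow> g \<in> carrier G \<Longrightarrow> pg_source (J_map X G (c, g)) = g"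
  by (auto simp: J_map_path_class pg_source_path_class pathin_mult_const elim!: ucg_carrierE)

lemma pg_range_J_map:
  "c \<in> ucg_carrier X G \<Longrightarrow> g \<in> carrier G \<Longrightarrow> pg_range (J_map X G (c, g)) = ucg_proj c \<otimes> g"
  by (auto simp: J_map_path_class pg_range_path_class pathin_mult_const ucg_proj_def rep_path_class_1
      elim!: ucg_carrierE)

lemma J_map_tg_mult:
  assumes \<eta>: "\<eta> \<in> ucg_carrier X G" "h \<in> carrier G" and \<gamma>: "\<gamma> \<in> ucg_carrier X G" "g \<in> carrier G"
    and composable: "h = ucg_proj \<gamma> \<otimes> g"
  shows "J_map X G (tg_mult X G (\<eta>, h) (\<gamma>, g)) = pg_mult X (J_map X G (\<eta>, h)) (J_map X G (\<gamma>, g))"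
proof -
  obtain e where e: "pathin X e" "e 0 = \<one>" "\<eta> = path_class X e"
    using \<eta>(1) by (rule ucg_carrierE)
  obtain c where c: "pathin X c" "c 0 = \<one>" "\<gamma> = path_class X c"
    using \<gamma>(1) by (rule ucg_carrierE)
  have h: "h = c 1 \<otimes> g"
    using composable c by (simp add: ucg_proj_def rep_path_class_1)
  have hom: "path_homotopic X (\<lambda>t. e t \<otimes> c t \<otimes> g) (\<lambda>t. pjoin c (\<lambda>t. e t \<otimes> c 1) t \<otimes> g)"
    using e c \<gamma>(2) by (intro path_homotopic_mult_const path_homotopic_mult_pjoin)
  have eq: "pjoin c (\<lambda>t. e t \<otimes> c 1) t \<otimes> g = pjoin (\<lambda>t. c t \<otimes> g) (\<lambda>t. e t \<otimes> h) t"
    if "t \<in> {0..1}" for t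
  proof (cases "t \<le> 1/2")
    case False
    then have "e (2 * t - 1) \<in> carrier G" "c 1 \<in> carrier G"
      using that path_in_carrier[OF e(1)] path_in_carrier[OF c(1)] by auto
    with False show ?thesis using h \<gamma>(2) by (simp add: pjoin_def m_assoc)
  qed (simp add: pjoin_def)
  have "path_class X (\<lambda>t. e t \<otimes> c t \<otimes> g) =
      path_class X (pjoin (\<lambda>t. c t \<otimes> g) (\<lambda>t. e t \<otimes> h))"
    by (rule path_class_eq[OF path_homotopic_eq_on_trans[OF hom eq]])
  also have "\<dots> = pg_mult X (J_map X G (\<eta>, h)) (J_map X G (\<gamma>, g))"
    using e c \<eta>(2) \<gamma>(2) h
    by (simp add: J_map_path_class pathin_mult_const pg_mult_path_class)
  finally show ?thesis
    using e c \<gamma>(2) by (simp add: tg_mult_def J_map_path_class ucg_mult_path_class pathin_mult)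
qed

lemma J_map_tg_inv:
  assumes \<gamma>: "\<gamma> \<in> ucg_carrier X G" "g \<in> carrier G"
  shows "J_map X G (tg_inv X G (\<gamma>, g)) = pg_inv X (J_map X G (\<gamma>, g))"
proof -
  obtain c where c: "pathin X c" "c 0 = \<one>" "\<gamma> = path_class X c"
    using \<gamma>(1) by (rule ucg_carrierE)
  have c1: "c 1 \<in> carrier G" using path_in_carrier[OF c(1)] by simp
  have "J_map X G (tg_inv X G (\<gamma>, g)) = path_class X (\<lambda>t. inv (c t) \<otimes> (c 1 \<otimes> g))"
    using c c1 \<gamma>(2)
    by (simp add: tg_inv_def ucg_inv_path_class J_map_path_class pathin_inv ucg_proj_def rep_path_class_1)
  also have "\<dots> = path_class X (\<lambda>t. inv (c t) \<otimes> c 1 \<otimes> g)"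
    using c c1 \<gamma>(2) path_in_carrier[OF c(1)]
    by (intro path_class_eq_on) (auto simp: m_assoc pathin_mult_const pathin_inv)
  also have "\<dots> = path_class X (\<lambda>t. preverse c t \<otimes> g)"
    using c \<gamma>(2) by (intro path_class_eq path_homotopic_mult_const path_homotopic_inv_mult)
  also have "\<dots> = pg_inv X (J_map X G (\<gamma>, g))"
    using c \<gamma>(2) by (simp add: J_map_path_class pg_inv_path_class pathin_mult_const preverse_def)
  finally show ?thesis .
qed

lemma topological_groupoid_iso_J_map:
  "topological_groupoid_iso
     (tg_topology X G) tg_source (tg_range G) (tg_mult X G) (tg_inv X G)
     (uc_topology X) pg_source pg_range (pg_mult X) (pg_inv X) (J_map X G)"
  unfolding topological_groupoid_iso_def
proof (intro conjI ballI)
  show "homeomorphic_map (tg_topology X G) (uc_topology X) (J_map X G)"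
    unfolding homeomorphic_map_maps homeomorphic_maps_def
    using continuous_map_J_map continuous_map_J_inverse J_inverse_J_map J_map_J_inverse
    by (auto simp: topspace_tg_topology topspace_uc_topology)
  fix x y assume "x \<in> topspace (tg_topology X G)" "y \<in> topspace (tg_topology X G)"
  then obtain \<eta> h \<gamma> g where xy: "x = (\<eta>, h)" "y = (\<gamma>, g)" "\<eta> \<in> ucg_carrier X G" "h \<in> carrier G"
    "\<gamma> \<in> ucg_carrier X G" "g \<in> carrier G"
    by (auto simp: topspace_tg_topology)
  then show "tg_source x = tg_range G y \<longleftrightarrow> pg_source (J_map X G x) = pg_range (J_map X G y)"
    by (simp add: tg_source_def tg_range_def pg_source_J_map pg_range_J_map)
  show "tg_source x = tg_range G y \<longrightarrow>
      J_map X G (tg_mult X G x y) = pg_mult X (J_map X G x) (J_map X G y)"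
  proof
    assume "tg_source x = tg_range G y"
    then have "h = ucg_proj \<gamma> \<otimes> g" using xy by (simp add: tg_source_def tg_range_def)
    then show "J_map X G (tg_mult X G x y) = pg_mult X (J_map X G x) (J_map X G y)"
      using J_map_tg_mult[OF xy(3-6)] xy(1,2) by simp
  qed
next
  fix x assume "x \<in> topspace (tg_topology X G)"
  then show "J_map X G (tg_inv X G x) = pg_inv X (J_map X G x)"
    by (auto simp: topspace_tg_topology J_map_tg_inv)
qed

end

theorem theorem2p13:
  fixes X :: "'a topology" and G :: "'a monoid"
  assumes "topological_group X G"
    and "locally_path_connected_space X"
    and "path_connected_space X"
    and "semilocally_simply_connected X"
  shows "tg_arrows X G = topspace (tg_topology X G)
       \<and> fundamental_groupoid X = topspace (uc_topology X)
       \<and> topological_groupoid_iso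
           (tg_topology X G) tg_source (tg_range G) (tg_mult X G) (tg_inv X G)
           (uc_topology X) pg_source pg_range (pg_mult X) (pg_inv X)
           (J_map X G)"
proof -
  interpret universal_covering_group X G
    using assms by unfold_locales
  show ?thesis
    using topspace_tg_topology topspace_uc_topology topological_groupoid_iso_J_map
    by (simp add: tg_arrows_def carrier_eq_topspace)
qed

end
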